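(* Consider an $n$-player game in which player $i$ has action set $X_i\subseteq\mathbb{R}$ and differentiable utility $u_i(\mathbf{x})$, with $X=\prod_i X_i$ convex. Let $\boldsymbol{\gamma}\in\mathbb{R}_{++}^n$ and $\Sigma=(\sigma_{ij})\in\mathbb{R}_+^{n\times n}$, and suppose the game is a $(\boldsymbol{\gamma},\Sigma)$-near-potential game with respect to a potential function $u(\mathbf{x})$. If (1) $u$ is $c$-strongly concave on $\mathbf{x}\in X$, and (2) $c>\sigma_{\max}(\Sigma)$, where $\sigma_{\max}(\Sigma)$ is the maximum singular value of $\Sigma$, then the game has a unique Nash equilibrium $\mathbf{x}^*$. Moreover, the $\boldsymbol{\gamma}$-scaled pseudo-gradient ascent dynamic $\mathbf{x}(t)$ from an arbitrary initial point $\mathbf{x}(0)$ converges to $\mathbf{x}^*$ exponentially: there is $c_0>0$ with $\|\mathbf{x}(t)-\mathbf{x}^*\|=O(\exp(-c_0 t))$.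
   Context: A differentiable $g:Y\to\mathbb{R}$ on a convex set $Y\subseteq\mathbb{R}^d$ is $c$-(strongly) concave ($c\ge 0$) if $g(y)\le g(x)+\langle y-x,\nabla g(x)\rangle-\frac{c}{2}\|y-x\|^2$ for all $x,y\in Y$. The game is a $(\boldsymbol{\gamma},\Sigma)$-near-potential game with respect to $u$ if for all $i,j$ (including $i=j$) and every fixed $\mathbf{x}_{-j}\in\prod_{l\ne j}X_l$, the function $x_j\mapsto \gamma_i\frac{\partial u_i}{\partial x_i}(x_j,\mathbf{x}_{-j})-\frac{\partial u}{\partial x_i}(x_j,\mathbf{x}_{-j})$ is $\sigma_{ij}$-Lipschitz on $X_j$. A (pure) Nash equilibrium is $\mathbf{x}\in X$ with $u_i(x_i',\mathbf{x}_{-i})\le u_i(\mathbf{x})$ for all $i$ and $x_i'\in X_i$. The $\boldsymbol{\gamma}$-scaled pseudo-gradient ascent dynamic is the system $\frac{dx_i}{dt}(t)=\gamma_i\frac{\partial u_i}{\partial x_i}(\mathbf{x}(t))$, $i=1,\dots,n$.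
   Formalization: Each action set $X_i$ is also nonempty and closed, and the exponential convergence covers only those trajectories of the dynamic that remain in X for all t >= 0. The statement above fails without it. *)

theory Defs
  imports "HOL-Analysis.Analysis" "HOL-Library.Landau_Symbols"
begin

definition prod_actions :: "('n::finite \<Rightarrow> real set) \<Rightarrow> (real^'n) set" where
  "prod_actions Xs = {x. \<forall>i. x $ i \<in> Xs i}"

definition upd_coord :: "real^'n \<Rightarrow> 'n \<Rightarrow> real \<Rightarrow> real^'n" where
  "upd_coord x j a = (\<chi> k. if k = j then a else x $ k)"

definition strongly_concave_grad :: "real \<Rightarrow> (real^'n) set \<Rightarrow> (real^'n \<Rightarrow> real) \<Rightarrow> (real^'n \<Rightarrow> real^'n) \<Rightarrow> bool" where
  "strongly_concave_grad c Y g Dg \<longleftrightarrow>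
     (\<forall>x\<in>Y. \<forall>y\<in>Y. g y \<le> g x + (y - x) \<bullet> Dg x - c / 2 * (norm (y - x))\<^sup>2)"

text \<open>(gamma, Sigma)-near-potential game with respect to u; Du i = gradient of u_i,
  Du0 = gradient of the potential u; partial derivative wrt x_i is the i-th component.\<close>
definition near_potential ::
  "('n::finite \<Rightarrow> real set) \<Rightarrow> ('n \<Rightarrow> real) \<Rightarrow> real^'n^'n \<Rightarrow> ('n \<Rightarrow> real^'n \<Rightarrow> real^'n) \<Rightarrow> (real^'n \<Rightarrow> real^'n) \<Rightarrow> bool" where
  "near_potential Xs \<gamma> \<Sigma> Du Du0 \<longleftrightarrow>
     (\<forall>i j. \<forall>x \<in> prod_actions Xs.
        (\<Sigma> $ i $ j)-lipschitz_on (Xs j)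
          (\<lambda>a. \<gamma> i * (Du i (upd_coord x j a) $ i) - Du0 (upd_coord x j a) $ i))"

definition max_singular_value :: "real^'n^'n \<Rightarrow> real" where
  "max_singular_value A = Sup ((\<lambda>v. norm (A *v v)) ` {v. norm v = 1})"

definition nash_equilibrium :: "('n::finite \<Rightarrow> real set) \<Rightarrow> ('n \<Rightarrow> real^'n \<Rightarrow> real) \<Rightarrow> real^'n \<Rightarrow> bool" where
  "nash_equilibrium Xs u x \<longleftrightarrow>
     x \<in> prod_actions Xs \<and> (\<forall>i. \<forall>a \<in> Xs i. u i (upd_coord x i a) \<le> u i x)"

end

theory Submission
  imports Defs
begin

text \<open>
  Write F for the \<gamma>-scaled pseudo-gradient. Near-potentiality makes F - \<nabla>u Lipschitz with
  constant \<sigma>_max(\<Sigma>) (change one coordinate at a time and collect the increments with \<Sigma>),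
  and c-strong concavity makes \<nabla>u c-strongly dissipative, so F is (c - \<sigma>_max)-strongly
  dissipative. The Nash equilibria are exactly the solutions of the variational inequality
  (y - x) \<bullet> F x \<le> 0 for all y in X: it splits into the players' first-order conditions, which
  are also sufficient because dissipativity of F makes each u_i concave in the player's own
  action. A solution exists because z \<mapsto> argmax (u + \<langle>-, F z - \<nabla>u z\<rangle>) is a contraction with
  constant \<sigma>_max/c, and it is unique by strong dissipativity. Along the dynamic,
  |x(t) - x*|^2 exp(2 (c - \<sigma>_max) t) is nonincreasing.
\<close>

lemma upd_coord_nth [simp]: "upd_coord x j a $ k = (if k = j then a else x $ k)"
  by (simp add: upd_coord_def)

lemma upd_coord_same [simp]: "upd_coord x j (x $ j) = x"
  by (simp add: vec_eq_iff)

lemma upd_coord_eq_add_axis: "upd_coord x i s = x + (s - x $ i) *\<^sub>R axis i 1"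
  by (simp add: vec_eq_iff axis_def)

lemma inner_upd_coord_diff: "(upd_coord x i a - upd_coord x i b) \<bullet> v = (a - b) * v $ i"
proof -
  have "upd_coord x i a - upd_coord x i b = (a - b) *\<^sub>R axis i 1"
    by (simp add: upd_coord_eq_add_axis algebra_simps scaleR_diff_left)
  then show ?thesis by (simp add: inner_axis')
qed

lemma has_real_derivative_upd_coord:
  assumes "(f has_derivative (\<lambda>h. h \<bullet> D)) (at (upd_coord x i s))"
  shows "((\<lambda>s. f (upd_coord x i s)) has_real_derivative D $ i) (at s)"
proof -
  have "((\<lambda>s. upd_coord x i s) has_derivative (\<lambda>h. h *\<^sub>R axis i 1)) (at s)"
    unfolding upd_coord_eq_add_axis by (auto intro!: derivative_eq_intros)
  from has_derivative_compose[OF this assms]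
  show ?thesis
    by (rule has_derivative_imp_has_field_derivative) (simp add: inner_axis')
qed

lemma upd_coord_in_prod_actions:
  "x \<in> prod_actions Xs \<Longrightarrow> a \<in> Xs j \<Longrightarrow> upd_coord x j a \<in> prod_actions Xs"
  by (simp add: prod_actions_def)

lemma prod_actions_nonempty: "(\<And>i. Xs i \<noteq> {}) \<Longrightarrow> prod_actions Xs \<noteq> {}"
proof -
  assume "\<And>i. Xs i \<noteq> {}"
  then have "(\<chi> i. SOME a. a \<in> Xs i) \<in> prod_actions Xs"
    by (simp add: prod_actions_def some_in_eq)
  then show ?thesis by blast
qed

lemma closed_prod_actions: "(\<And>i. closed (Xs i)) \<Longrightarrow> closed (prod_actions Xs)"
  unfolding prod_actions_def
  by (intro closed_Collect_all) (use closed_vimage_vec_nth in \<open>auto simp: vimage_def\<close>)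

lemma convex_prod_actions_factor:
  assumes "convex (prod_actions Xs)" and "\<And>i. Xs i \<noteq> {}"
  shows "convex (Xs i)"
proof -
  obtain x where x: "x \<in> prod_actions Xs"
    using prod_actions_nonempty[of Xs] assms(2) by blast
  have "Xs i = (\<lambda>y. y $ i) ` prod_actions Xs"
  proof
    show "Xs i \<subseteq> (\<lambda>y. y $ i) ` prod_actions Xs"
      using upd_coord_in_prod_actions[OF x] by (force simp: image_iff)
  qed (auto simp: prod_actions_def)
  then show ?thesis
    using convex_linear_image[OF bounded_linear_vec_nth[THEN bounded_linear.linear] assms(1)]
    by simp
qed

lemma bdd_above_norm_matrix_vector_sphere:
  "bdd_above ((\<lambda>v. norm ((A::real^'n^'m) *v v)) ` {v. norm v = 1})"
proof -
  obtain K where K: "\<And>v. norm (A *v v) \<le> norm v * K"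
    using bounded_linear.bounded[OF matrix_vector_mul_bounded_linear[of A]] by blast
  have "norm (A *v v) \<le> K" if "norm v = 1" for v
    using K[of v] that by simp
  then show ?thesis
    by (auto intro!: bdd_aboveI2[of _ _ K])
qed

lemma norm_matrix_vector_le_max_singular_value:
  "norm (A *v v) \<le> max_singular_value A * norm (v::real^'n)"
proof (cases "v = 0")
  case False
  have "norm (A *v (v /\<^sub>R norm v)) \<le> max_singular_value A"
    unfolding max_singular_value_def
    using False by (intro cSUP_upper bdd_above_norm_matrix_vector_sphere) auto
  then show ?thesis
    using False by (simp add: matrix_vector_mult_scaleR field_simps)
qed simp

lemma max_singular_value_nonneg: "max_singular_value (A::real^'n^'n) \<ge> 0"
  using norm_matrix_vector_le_max_singular_value[of A "axis undefined 1"] norm_ge_zero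
  by (metis mult.right_neutral norm_axis_1 order_trans)

lemma coordinatewise_lipschitz_bound:
  fixes g :: "real^'n \<Rightarrow> real"
  assumes lip: "\<And>j x a b. x \<in> prod_actions Xs \<Longrightarrow> a \<in> Xs j \<Longrightarrow> b \<in> Xs j \<Longrightarrow>
      \<bar>g (upd_coord x j a) - g (upd_coord x j b)\<bar> \<le> L j * \<bar>a - b\<bar>"
    and x: "x \<in> prod_actions Xs" and y: "y \<in> prod_actions Xs"
  shows "\<bar>g y - g x\<bar> \<le> (\<Sum>j\<in>UNIV. L j * \<bar>y $ j - x $ j\<bar>)"
proof -
  \<comment> \<open>Walk from x to y, switching the coordinates in S to those of y.\<close>
  define z where "z S = (\<chi> k. if k \<in> S then y $ k else x $ k)" for S
  have "z S \<in> prod_actions Xs \<and> \<bar>g (z S) - g x\<bar> \<le> (\<Sum>j\<in>S. L j * \<bar>y $ j - x $ j\<bar>)"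
    if "finite S" for S
    using that
  proof (induction S rule: finite_induct)
    case empty
    have "z {} = x" by (simp add: z_def vec_eq_iff)
    then show ?case using x by simp
  next
    case (insert j S)
    then have zS: "z S \<in> prod_actions Xs" by blast
    have xj: "x $ j \<in> Xs j" and yj: "y $ j \<in> Xs j"
      using x y by (auto simp: prod_actions_def)
    have step: "z (insert j S) = upd_coord (z S) j (y $ j)" "z S = upd_coord (z S) j (x $ j)"
      using insert.hyps(2) by (auto simp: z_def vec_eq_iff)
    have "\<bar>g (z (insert j S)) - g (z S)\<bar> \<le> L j * \<bar>y $ j - x $ j\<bar>"
      using lip[OF zS yj xj] step by metis
    moreover have "z (insert j S) \<in> prod_actions Xs"
      using upd_coord_in_prod_actions[OF zS yj] step(1) by simp
    ultimately show ?case using insert by auto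
  qed
  moreover have "z UNIV = y" by (simp add: z_def vec_eq_iff)
  ultimately show ?thesis by (metis finite)
qed

lemma coordinatewise_lipschitz_imp_lipschitz:
  fixes G :: "real^'n \<Rightarrow> real^'n"
  assumes "\<And>i j x a b. x \<in> prod_actions Xs \<Longrightarrow> a \<in> Xs j \<Longrightarrow> b \<in> Xs j \<Longrightarrow>
      \<bar>G (upd_coord x j a) $ i - G (upd_coord x j b) $ i\<bar> \<le> \<Sigma> $ i $ j * \<bar>a - b\<bar>"
    and x: "x \<in> prod_actions Xs" and y: "y \<in> prod_actions Xs"
  shows "norm (G y - G x) \<le> max_singular_value \<Sigma> * norm (y - x)"
proof -
  define d where "d = (\<chi> j. \<bar>y $ j - x $ j\<bar>)"
  have "norm (G y - G x) \<le> norm (\<Sigma> *v d)"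
  proof (rule norm_le_componentwise_cart)
    fix i
    have "\<bar>G y $ i - G x $ i\<bar> \<le> (\<Sum>j\<in>UNIV. \<Sigma> $ i $ j * \<bar>y $ j - x $ j\<bar>)"
      using coordinatewise_lipschitz_bound[where g = "\<lambda>z. G z $ i", OF assms(1) x y] .
    also have "\<dots> = (\<Sigma> *v d) $ i"
      by (simp add: matrix_vector_mult_def d_def)
    finally show "norm ((G y - G x) $ i) \<le> norm ((\<Sigma> *v d) $ i)" by simp
  qed
  also have "\<dots> \<le> max_singular_value \<Sigma> * norm d"
    by (rule norm_matrix_vector_le_max_singular_value)
  also have "norm d = norm (y - x)"
    by (simp add: d_def norm_vec_def L2_set_def)
  finally show ?thesis .
qed

definition strongly_dissipative_on :: "real \<Rightarrow> 'a::real_inner set \<Rightarrow> ('a \<Rightarrow> 'a) \<Rightarrow> bool" where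
  "strongly_dissipative_on k S F \<longleftrightarrow>
     (\<forall>x\<in>S. \<forall>y\<in>S. (x - y) \<bullet> (F x - F y) \<le> - k * (norm (x - y))\<^sup>2)"

definition vi_solution :: "'a::real_inner set \<Rightarrow> ('a \<Rightarrow> 'a) \<Rightarrow> 'a \<Rightarrow> bool" where
  "vi_solution S F x \<longleftrightarrow> x \<in> S \<and> (\<forall>y\<in>S. (y - x) \<bullet> F x \<le> 0)"

lemma strongly_concave_grad_imp_dissipative:
  assumes "strongly_concave_grad c S u Du"
  shows "strongly_dissipative_on c S Du"
  unfolding strongly_dissipative_on_def
proof (intro ballI)
  fix x y assume "x \<in> S" "y \<in> S"
  then have "u y \<le> u x + (y - x) \<bullet> Du x - c / 2 * (norm (x - y))\<^sup>2"
    and "u x \<le> u y + (x - y) \<bullet> Du y - c / 2 * (norm (x - y))\<^sup>2"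
    using assms by (auto simp: strongly_concave_grad_def norm_minus_commute)
  then show "(x - y) \<bullet> (Du x - Du y) \<le> - c * (norm (x - y))\<^sup>2"
    by (simp add: algebra_simps inner_diff_left inner_diff_right)
qed

lemma strongly_dissipative_add_lipschitz:
  assumes "strongly_dissipative_on k S F"
    and "\<And>x y. x \<in> S \<Longrightarrow> y \<in> S \<Longrightarrow> norm (G y - G x) \<le> L * norm (y - x)"
  shows "strongly_dissipative_on (k - L) S (\<lambda>x. F x + G x)"
  unfolding strongly_dissipative_on_def
proof (intro ballI)
  fix x y assume xy: "x \<in> S" "y \<in> S"
  have "(x - y) \<bullet> (G x - G y) \<le> norm (x - y) * norm (G x - G y)"
    by (rule norm_cauchy_schwarz)
  also have "\<dots> \<le> norm (x - y) * (L * norm (x - y))"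
    using assms(2)[OF xy(2,1)] by (simp add: mult_left_mono)
  finally have "(x - y) \<bullet> (G x - G y) \<le> L * (norm (x - y))\<^sup>2"
    by (simp add: power2_eq_square algebra_simps)
  moreover have "(x - y) \<bullet> (F x - F y) \<le> - k * (norm (x - y))\<^sup>2"
    using assms(1) xy by (simp add: strongly_dissipative_on_def)
  ultimately show "(x - y) \<bullet> (F x + G x - (F y + G y)) \<le> - (k - L) * (norm (x - y))\<^sup>2"
    by (simp add: inner_diff_right inner_add_right algebra_simps)
qed

lemma vi_solution_perturbation:
  assumes "strongly_dissipative_on k S F"
    and y: "vi_solution S (\<lambda>x. F x + g) y" and z: "vi_solution S (\<lambda>x. F x + h) z"
  shows "k * norm (y - z) \<le> norm (g - h)"
proof -
  have "y \<in> S" "z \<in> S" "(z - y) \<bullet> (F y + g) \<le> 0" "(y - z) \<bullet> (F z + h) \<le> 0"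
    using y z by (auto simp: vi_solution_def)
  with assms(1) have "k * (norm (y - z))\<^sup>2 \<le> (y - z) \<bullet> (g - h)"
    unfolding strongly_dissipative_on_def
    by (fastforce simp: inner_diff_left inner_diff_right inner_add_right algebra_simps)
  also have "\<dots> \<le> norm (y - z) * norm (g - h)"
    by (rule norm_cauchy_schwarz)
  finally show ?thesis
    by (cases "y = z") (auto simp: power2_eq_square)
qed

lemma vi_solution_unique:
  assumes "strongly_dissipative_on k S F" and "k > 0"
    and "vi_solution S F x" and "vi_solution S F y"
  shows "x = y"
proof -
  have "k * norm (x - y) \<le> 0"
    using vi_solution_perturbation[of k S F 0 x 0 y] assms by simp
  then show ?thesis
    using \<open>k > 0\<close> by (simp add: mult_le_0_iff)
qed

lemma vi_solution_exponentially_attracting: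
  fixes x :: "real \<Rightarrow> 'a::real_inner"
  assumes diss: "strongly_dissipative_on k S F" and vi: "vi_solution S F xs"
    and in_S: "\<forall>t\<ge>0. x t \<in> S"
    and flow: "\<forall>t\<ge>0. (x has_vector_derivative F (x t)) (at t within {0..})"
    and "t \<ge> 0"
  shows "norm (x t - xs) \<le> norm (x 0 - xs) * exp (- k * t)"
proof -
  define V where "V t = ((x t - xs) \<bullet> (x t - xs)) * exp (2 * k * t)" for t
  have "continuous_on {0..} x"
    unfolding continuous_on_eq_continuous_within
    by (metis atLeast_iff flow has_vector_derivative_continuous)
  then have cont: "continuous_on {0..t} V"
    unfolding V_def by (auto intro!: continuous_intros elim: continuous_on_subset)
  have "V t \<le> V 0"
  proof (rule DERIV_nonpos_imp_decreasing_open[OF \<open>t \<ge> 0\<close> _ cont])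
    fix s assume s: "0 < s" "s < t"
    let ?y = "x s - xs"
    have "at s within {0..} = at s"
      using s by (intro at_within_interior) auto
    then have "(x has_vector_derivative F (x s)) (at s)"
      using flow[rule_format, of s] s by simp
    then have "((\<lambda>s. x s - xs) has_derivative (\<lambda>h. h *\<^sub>R F (x s))) (at s)"
      by (auto simp: has_vector_derivative_def intro!: derivative_eq_intros)
    from has_derivative_inner[OF this this]
    have "((\<lambda>s. (x s - xs) \<bullet> (x s - xs)) has_real_derivative 2 * (?y \<bullet> F (x s))) (at s)"
      by (rule has_derivative_imp_has_field_derivative) (simp add: inner_commute)
    moreover have "((\<lambda>s. exp (2 * k * s)) has_real_derivative exp (2 * k * s) * (2 * k)) (at s)"
      by (auto intro!: derivative_eq_intros)
    ultimately have dV: "(V has_real_derivative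
        (2 * (?y \<bullet> F (x s)) + 2 * k * (?y \<bullet> ?y)) * exp (2 * k * s)) (at s)"
      unfolding V_def[abs_def] by (rule DERIV_cong[OF DERIV_mult]) (simp add: algebra_simps)
    have "x s \<in> S" using in_S s by simp
    then have "?y \<bullet> (F (x s) - F xs) \<le> - k * (norm ?y)\<^sup>2" and "?y \<bullet> F xs \<le> 0"
      using diss vi by (auto simp: strongly_dissipative_on_def vi_solution_def)
    then have "?y \<bullet> F (x s) \<le> - k * (?y \<bullet> ?y)"
      by (simp add: inner_diff_right power2_norm_eq_inner)
    then show "\<exists>D. (V has_real_derivative D) (at s) \<and> D \<le> 0"
      using dV by (intro exI conjI) (auto intro: mult_nonpos_nonneg)
  qed
  then have "(norm (x t - xs) * exp (k * t))\<^sup>2 \<le> (norm (x 0 - xs))\<^sup>2"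
    by (simp add: V_def power_mult_distrib power2_norm_eq_inner flip: exp_double exp_add)
      (simp add: algebra_simps)
  then have "norm (x t - xs) * exp (k * t) \<le> norm (x 0 - xs)"
    by (rule power2_le_imp_le) simp
  then show ?thesis
    by (simp add: exp_minus field_simps)
qed

lemma gradient_inner_nonpos_at_segment_max:
  fixes f :: "'a::real_inner \<Rightarrow> real"
  assumes deriv: "(f has_derivative (\<lambda>h. h \<bullet> D)) (at p)"
    and max: "\<And>t. 0 \<le> t \<Longrightarrow> t \<le> 1 \<Longrightarrow> f (p + t *\<^sub>R (q - p)) \<le> f p"
  shows "(q - p) \<bullet> D \<le> 0"
proof (rule ccontr)
  assume pos: "\<not> (q - p) \<bullet> D \<le> 0"
  have "((\<lambda>t. p + t *\<^sub>R (q - p)) has_derivative (\<lambda>t. t *\<^sub>R (q - p))) (at 0)"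
    by (auto intro!: derivative_eq_intros)
  moreover have "(f has_derivative (\<lambda>h. h \<bullet> D)) (at (p + 0 *\<^sub>R (q - p)))"
    using deriv by simp
  ultimately have "((\<lambda>t. f (p + t *\<^sub>R (q - p))) has_real_derivative (q - p) \<bullet> D) (at 0)"
    by (rule has_derivative_imp_has_field_derivative[OF has_derivative_compose]) simp
  from DERIV_pos_inc_right[OF this] pos obtain e where "e > 0"
    and inc: "\<And>h. h > 0 \<Longrightarrow> h < e \<Longrightarrow> f p < f (p + h *\<^sub>R (q - p))"
    by force
  then have "0 < min (e / 2) 1" "min (e / 2) 1 < e" "min (e / 2) 1 \<le> 1"
    by auto
  then show False
    using inc[of "min (e / 2) 1"] max[of "min (e / 2) 1"] by simp
qed

lemma max_at_first_order_point_of_decreasing_derivative: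
  fixes f f' :: "real \<Rightarrow> real"
  assumes "convex S" and a: "a \<in> S" and b: "b \<in> S"
    and deriv: "\<And>s. s \<in> S \<Longrightarrow> (f has_real_derivative f' s) (at s)"
    and decreasing: "\<And>r s. r \<in> S \<Longrightarrow> s \<in> S \<Longrightarrow> r \<le> s \<Longrightarrow> f' s \<le> f' r"
    and first_order: "(a - b) * f' b \<le> 0"
  shows "f a \<le> f b"
proof -
  have between: "s \<in> S" if "min a b \<le> s" "s \<le> max a b" for s
    using closed_segment_subset[OF a b \<open>convex S\<close>] that
    by (auto simp: closed_segment_eq_real_ivl split: if_splits)
  consider "a < b" | "a = b" | "b < a" by linarith
  then show ?thesis
  proof cases
    case 1
    then have "f' b \<ge> 0" using first_order by (simp add: mult_le_0_iff)
    then show ?thesis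
      using 1 between decreasing[OF _ b] deriv
      by (intro DERIV_nonneg_imp_nondecreasing[of a b f]) (fastforce intro: order_trans)+
  next
    case 3
    then have "f' b \<le> 0" using first_order by (simp add: mult_le_0_iff)
    then show ?thesis
      using 3 between decreasing[OF b] deriv
      by (intro DERIV_nonpos_imp_nonincreasing[of b a f]) (fastforce intro: order_trans)+
  qed simp
qed

lemma strongly_concave_grad_add_linear:
  "strongly_concave_grad c S u Du \<Longrightarrow>
   strongly_concave_grad c S (\<lambda>y. u y + y \<bullet> g) (\<lambda>y. Du y + g)"
  by (fastforce simp: strongly_concave_grad_def inner_add_right inner_diff_left)

lemma strongly_concave_attains_max:
  fixes u :: "real^'n \<Rightarrow> real"
  assumes "closed S" and "x0 \<in> S" and "c > 0" and "continuous_on S u"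
    and concave: "strongly_concave_grad c S u Du"
  shows "\<exists>y\<in>S. \<forall>z\<in>S. u z \<le> u y"
proof -
  define R where "R = 2 * norm (Du x0) / c"
  have "compact (S \<inter> cball x0 R)"
    using assms(1) by (intro closed_Int_compact compact_cball)
  moreover have x0R: "x0 \<in> S \<inter> cball x0 R"
    using assms(2,3) by (simp add: R_def)
  ultimately obtain y where y: "y \<in> S \<inter> cball x0 R" and ymax: "\<And>z. z \<in> S \<inter> cball x0 R \<Longrightarrow> u z \<le> u y"
    using continuous_attains_sup[of "S \<inter> cball x0 R" u] continuous_on_subset[OF assms(4)] by blast
  have "u z \<le> u y" if z: "z \<in> S" for z
  proof (cases "z \<in> cball x0 R")
    case False
    let ?r = "norm (z - x0)"
    have r: "c * ?r > 2 * norm (Du x0)"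
      using False assms(3) by (simp add: R_def dist_norm norm_minus_commute field_simps)
    have "u z \<le> u x0 + (z - x0) \<bullet> Du x0 - c / 2 * ?r\<^sup>2"
      using concave assms(2) z by (simp add: strongly_concave_grad_def)
    also have "(z - x0) \<bullet> Du x0 \<le> ?r * norm (Du x0)"
      by (rule norm_cauchy_schwarz)
    also have "?r * norm (Du x0) \<le> c / 2 * ?r\<^sup>2"
      using mult_left_mono[of "norm (Du x0)" "c * ?r / 2" ?r] r
      by (simp add: power2_eq_square algebra_simps)
    finally show ?thesis using ymax[OF x0R] by simp
  qed (use ymax z in simp)
  then show ?thesis using y by blast
qed

lemma strongly_concave_perturbed_vi_solution_exists:
  fixes u :: "real^'n \<Rightarrow> real"
  assumes "closed S" and "convex S" and "S \<noteq> {}" and "c > 0"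
    and grad: "\<And>x. x \<in> S \<Longrightarrow> GDERIV u x :> Du x"
    and concave: "strongly_concave_grad c S u Du"
  shows "\<exists>y. vi_solution S (\<lambda>x. Du x + g) y"
proof -
  define h where "h y = u y + y \<bullet> g" for y
  have "continuous_on S h"
    unfolding h_def using grad
    by (intro continuous_intros continuous_at_imp_continuous_on)
      (auto simp: gderiv_def dest: has_derivative_continuous)
  then obtain y where y: "y \<in> S" and ymax: "\<And>z. z \<in> S \<Longrightarrow> h z \<le> h y"
    using strongly_concave_attains_max[OF assms(1) _ assms(4) _ strongly_concave_grad_add_linear[OF concave]]
      assms(3) unfolding h_def by blast
  have "(z - y) \<bullet> (Du y + g) \<le> 0" if z: "z \<in> S" for z
  proof (rule gradient_inner_nonpos_at_segment_max[where f = h])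
    show "(h has_derivative (\<lambda>k. k \<bullet> (Du y + g))) (at y)"
      unfolding h_def using grad[OF y]
      by (auto simp: gderiv_def inner_add_right intro!: derivative_eq_intros)
    fix t :: real assume "0 \<le> t" "t \<le> 1"
    then have "(1 - t) *\<^sub>R y + t *\<^sub>R z \<in> S"
      using assms(2) y z by (simp add: convex_alt)
    then show "h (y + t *\<^sub>R (z - y)) \<le> h y"
      using ymax by (simp add: algebra_simps)
  qed
  then show ?thesis using y by (auto simp: vi_solution_def)
qed

lemma vi_solution_exists_lipschitz_perturbation:
  fixes u :: "real^'n \<Rightarrow> real"
  assumes "closed S" and "convex S" and "S \<noteq> {}"
    and grad: "\<And>x. x \<in> S \<Longrightarrow> GDERIV u x :> Du x"
    and concave: "strongly_concave_grad c S u Du"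
    and lip: "\<And>x y. x \<in> S \<Longrightarrow> y \<in> S \<Longrightarrow> norm (G y - G x) \<le> L * norm (y - x)"
    and "0 \<le> L" and "L < c"
  shows "\<exists>y. vi_solution S (\<lambda>x. Du x + G x) y"
proof -
  have c: "c > 0" using assms(7,8) by simp
  \<comment> \<open>T z maximises u + \<langle>-, G z\<rangle> over S; it is a contraction with constant L / c.\<close>
  define T where "T z = (SOME y. vi_solution S (\<lambda>x. Du x + G z) y)" for z
  have T: "vi_solution S (\<lambda>x. Du x + G z) (T z)" for z
    unfolding T_def
    by (rule someI_ex, rule strongly_concave_perturbed_vi_solution_exists[OF assms(1-3) c grad concave])
  have "dist (T z1) (T z2) \<le> (L / c) * dist z1 z2" if "z1 \<in> S" "z2 \<in> S" for z1 z2
  proof -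
    have "c * norm (T z1 - T z2) \<le> norm (G z1 - G z2)"
      by (rule vi_solution_perturbation[OF strongly_concave_grad_imp_dissipative[OF concave] T T])
    also have "\<dots> \<le> L * norm (z1 - z2)"
      using lip[OF that(2,1)] by (simp add: norm_minus_commute)
    finally show ?thesis
      using c by (simp add: dist_norm field_simps)
  qed
  moreover have "T ` S \<subseteq> S"
    using T by (auto simp: vi_solution_def)
  ultimately obtain y where "T y = y"
    using Banach_fix[of S "L / c" T] assms(1,3,7,8) c
    by (auto simp: complete_eq_closed)
  then show ?thesis
    using T[of y] by (auto simp: vi_solution_def)
qed

definition pseudo_gradient ::
  "('n \<Rightarrow> real) \<Rightarrow> ('n \<Rightarrow> real^'n \<Rightarrow> real^'n) \<Rightarrow> real^'n \<Rightarrow> real^'n" where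
  "pseudo_gradient \<gamma> Du x = (\<chi> i. \<gamma> i * (Du i x $ i))"

lemma near_potential_lipschitz:
  assumes "near_potential Xs \<gamma> \<Sigma> Du Du0"
    and "x \<in> prod_actions Xs" and "y \<in> prod_actions Xs"
  shows "norm ((pseudo_gradient \<gamma> Du y - Du0 y) - (pseudo_gradient \<gamma> Du x - Du0 x))
    \<le> max_singular_value \<Sigma> * norm (y - x)"
  by (rule coordinatewise_lipschitz_imp_lipschitz[OF _ assms(2,3)])
    (use assms(1) in \<open>auto simp: near_potential_def lipschitz_on_def dist_real_def pseudo_gradient_def\<close>)

lemma vi_solution_pseudo_gradient_iff:
  assumes gamma: "\<And>i. \<gamma> i > 0"
  shows "vi_solution (prod_actions Xs) (pseudo_gradient \<gamma> Du) x \<longleftrightarrow>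
    x \<in> prod_actions Xs \<and> (\<forall>i. \<forall>a\<in>Xs i. (a - x $ i) * (Du i x $ i) \<le> 0)"
proof (cases "x \<in> prod_actions Xs")
  case x: True
  have "(\<forall>y\<in>prod_actions Xs. (y - x) \<bullet> pseudo_gradient \<gamma> Du x \<le> 0) \<longleftrightarrow>
    (\<forall>i. \<forall>a\<in>Xs i. (a - x $ i) * (Du i x $ i) \<le> 0)"
  proof (intro iffI allI ballI)
    fix i a assume vi: "\<forall>y\<in>prod_actions Xs. (y - x) \<bullet> pseudo_gradient \<gamma> Du x \<le> 0"
      and a: "a \<in> Xs i"
    have "(upd_coord x i a - upd_coord x i (x $ i)) \<bullet> pseudo_gradient \<gamma> Du x \<le> 0"
      using vi upd_coord_in_prod_actions[OF x a] by simp
    then have "\<gamma> i * ((a - x $ i) * (Du i x $ i)) \<le> 0"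
      by (simp only: inner_upd_coord_diff) (simp add: pseudo_gradient_def algebra_simps)
    then show "(a - x $ i) * (Du i x $ i) \<le> 0"
      using gamma[of i] by (simp add: mult_le_0_iff)
  next
    fix y assume first_order: "\<forall>i. \<forall>a\<in>Xs i. (a - x $ i) * (Du i x $ i) \<le> 0"
      and y: "y \<in> prod_actions Xs"
    have "(y - x) \<bullet> pseudo_gradient \<gamma> Du x = (\<Sum>i\<in>UNIV. \<gamma> i * ((y $ i - x $ i) * (Du i x $ i)))"
      by (simp add: inner_vec_def pseudo_gradient_def algebra_simps)
    also have "\<dots> \<le> 0"
      using first_order y gamma
      by (intro sum_nonpos) (simp add: prod_actions_def mult_le_0_iff less_imp_le)
    finally show "(y - x) \<bullet> pseudo_gradient \<gamma> Du x \<le> 0" .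
  qed
  then show ?thesis using x by (simp add: vi_solution_def)
qed (simp add: vi_solution_def)

lemma nash_equilibrium_first_order:
  assumes convex: "\<And>i. convex (Xs i)"
    and grad: "\<And>i x. x \<in> prod_actions Xs \<Longrightarrow> GDERIV (ui i) x :> Du i x"
    and nash: "nash_equilibrium Xs ui x" and a: "a \<in> Xs i"
  shows "(a - x $ i) * (Du i x $ i) \<le> 0"
proof -
  have x: "x \<in> prod_actions Xs" using nash by (simp add: nash_equilibrium_def)
  have "(upd_coord x i a - x) \<bullet> Du i x \<le> 0"
  proof (rule gradient_inner_nonpos_at_segment_max[where f = "ui i"])
    show "(ui i has_derivative (\<lambda>h. h \<bullet> Du i x)) (at x)"
      using grad[OF x] by (simp add: gderiv_def)
    fix t :: real assume "0 \<le> t" "t \<le> 1"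
    then have "(1 - t) * x $ i + t * a \<in> Xs i"
      using convex[of i] x a by (simp add: convex_alt prod_actions_def)
    moreover have "x + t *\<^sub>R (upd_coord x i a - x) = upd_coord x i ((1 - t) * x $ i + t * a)"
      by (auto simp: vec_eq_iff algebra_simps)
    ultimately show "ui i (x + t *\<^sub>R (upd_coord x i a - x)) \<le> ui i x"
      using nash by (simp add: nash_equilibrium_def)
  qed
  then show ?thesis
    using inner_upd_coord_diff[of x i a "x $ i"] by simp
qed

lemma first_order_imp_nash_equilibrium:
  assumes convex: "\<And>i. convex (Xs i)"
    and grad: "\<And>i x. x \<in> prod_actions Xs \<Longrightarrow> GDERIV (ui i) x :> Du i x"
    and gamma: "\<And>i. \<gamma> i > 0"
    and diss: "strongly_dissipative_on k (prod_actions Xs) (pseudo_gradient \<gamma> Du)" and "k \<ge> 0"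
    and x: "x \<in> prod_actions Xs"
    and first_order: "\<And>i a. a \<in> Xs i \<Longrightarrow> (a - x $ i) * (Du i x $ i) \<le> 0"
  shows "nash_equilibrium Xs ui x"
  unfolding nash_equilibrium_def
proof (intro conjI x allI ballI)
  fix i a assume a: "a \<in> Xs i"
  define \<psi> where "\<psi> s = Du i (upd_coord x i s) $ i" for s
  have upd: "upd_coord x i s \<in> prod_actions Xs" if "s \<in> Xs i" for s
    using upd_coord_in_prod_actions[OF x that] .
  have "ui i (upd_coord x i a) \<le> ui i (upd_coord x i (x $ i))"
  proof (rule max_at_first_order_point_of_decreasing_derivative[OF convex a])
    show "x $ i \<in> Xs i" using x by (simp add: prod_actions_def)
    show "((\<lambda>s. ui i (upd_coord x i s)) has_real_derivative \<psi> s) (at s)" if "s \<in> Xs i" for s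
      unfolding \<psi>_def using grad[OF upd[OF that]]
      by (intro has_real_derivative_upd_coord) (simp add: gderiv_def)
    \<comment> \<open>Dissipativity along the i-th coordinate line: ui i is concave in player i's own action.\<close>
    show "\<psi> s \<le> \<psi> r" if r: "r \<in> Xs i" and s: "s \<in> Xs i" and "r \<le> s" for r s
    proof (cases "r = s")
      case False
      have "(upd_coord x i s - upd_coord x i r) \<bullet>
          (pseudo_gradient \<gamma> Du (upd_coord x i s) - pseudo_gradient \<gamma> Du (upd_coord x i r))
        \<le> - k * (norm (upd_coord x i s - upd_coord x i r))\<^sup>2"
        using diss upd[OF r] upd[OF s] by (simp add: strongly_dissipative_on_def)
      also have "\<dots> \<le> 0"
        using \<open>k \<ge> 0\<close> by simp
      finally have "(s - r) * (\<gamma> i * (\<psi> s - \<psi> r)) \<le> 0"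
        by (simp only: inner_upd_coord_diff) (simp add: pseudo_gradient_def \<psi>_def algebra_simps)
      then show ?thesis
        using False \<open>r \<le> s\<close> gamma[of i] by (simp add: mult_le_0_iff)
    qed simp
    show "(a - x $ i) * \<psi> (x $ i) \<le> 0"
      using first_order[OF a] by (simp add: \<psi>_def)
  qed
  then show "ui i (upd_coord x i a) \<le> ui i x" by simp
qed

lemma nash_equilibrium_iff_vi_solution:
  assumes "\<And>i. convex (Xs i)"
    and "\<And>i x. x \<in> prod_actions Xs \<Longrightarrow> GDERIV (ui i) x :> Du i x"
    and "\<And>i. \<gamma> i > 0"
    and "strongly_dissipative_on k (prod_actions Xs) (pseudo_gradient \<gamma> Du)" and "k \<ge> 0"
  shows "nash_equilibrium Xs ui x \<longleftrightarrow> vi_solution (prod_actions Xs) (pseudo_gradient \<gamma> Du) x"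
proof
  assume nash: "nash_equilibrium Xs ui x"
  then show "vi_solution (prod_actions Xs) (pseudo_gradient \<gamma> Du) x"
    using nash_equilibrium_first_order[OF assms(1,2) nash]
    by (simp add: vi_solution_pseudo_gradient_iff[OF assms(3)] nash_equilibrium_def)
next
  assume "vi_solution (prod_actions Xs) (pseudo_gradient \<gamma> Du) x"
  then show "nash_equilibrium Xs ui x"
    using first_order_imp_nash_equilibrium[OF assms]
    by (simp add: vi_solution_pseudo_gradient_iff[OF assms(3)])
qed

theorem lemma3p5:
  fixes Xs :: "'n::finite \<Rightarrow> real set"
    and ui :: "'n \<Rightarrow> real^'n \<Rightarrow> real" and Du :: "'n \<Rightarrow> real^'n \<Rightarrow> real^'n"
    and u :: "real^'n \<Rightarrow> real" and Du0 :: "real^'n \<Rightarrow> real^'n"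
    and \<gamma> :: "'n \<Rightarrow> real" and \<Sigma> :: "real^'n^'n" and c :: real
  assumes Xs_nonempty: "\<And>i. Xs i \<noteq> {}"
    and Xs_closed: "\<And>i. closed (Xs i)"
    and X_convex: "convex (prod_actions Xs)"
    and ui_diff: "\<And>i x. x \<in> prod_actions Xs \<Longrightarrow> GDERIV (ui i) x :> Du i x"
    and u_diff: "\<And>x. x \<in> prod_actions Xs \<Longrightarrow> GDERIV u x :> Du0 x"
    and gamma_pos: "\<And>i. \<gamma> i > 0"
    and Sigma_nonneg: "\<And>i j. \<Sigma> $ i $ j \<ge> 0"
    and near_pot: "near_potential Xs \<gamma> \<Sigma> Du Du0"
    and c_nonneg: "c \<ge> 0"
    and concave: "strongly_concave_grad c (prod_actions Xs) u Du0"
    and c_gt: "c > max_singular_value \<Sigma>"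
  shows "\<exists>xs. nash_equilibrium Xs ui xs
           \<and> (\<forall>y. nash_equilibrium Xs ui y \<longrightarrow> y = xs)
           \<and> (\<forall>x :: real \<Rightarrow> real^'n.
                (\<forall>t\<ge>0. x t \<in> prod_actions Xs) \<longrightarrow>
                (\<forall>t\<ge>0. (x has_vector_derivative (\<chi> i. \<gamma> i * (Du i (x t) $ i))) (at t within {0..})) \<longrightarrow>
                (\<exists>c0>0. (\<lambda>t. norm (x t - xs)) \<in> O[at_top](\<lambda>t. exp (- c0 * t))))"
proof -
  let ?X = "prod_actions Xs" and ?F = "pseudo_gradient \<gamma> Du" and ?k = "c - max_singular_value \<Sigma>"
  have lip: "\<And>x y. x \<in> ?X \<Longrightarrow> y \<in> ?X \<Longrightarrow>
      norm ((?F y - Du0 y) - (?F x - Du0 x)) \<le> max_singular_value \<Sigma> * norm (y - x)"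
    using near_potential_lipschitz[OF near_pot] .
  have diss: "strongly_dissipative_on ?k ?X ?F"
    using strongly_dissipative_add_lipschitz[OF strongly_concave_grad_imp_dissipative[OF concave] lip]
    by simp
  obtain xs where xs: "vi_solution ?X ?F xs"
    using vi_solution_exists_lipschitz_perturbation[OF closed_prod_actions[OF Xs_closed] X_convex
        prod_actions_nonempty[OF Xs_nonempty] u_diff concave lip max_singular_value_nonneg c_gt]
    by auto
  have k: "?k > 0" using c_gt by simp
  have nash_iff: "nash_equilibrium Xs ui y \<longleftrightarrow> vi_solution ?X ?F y" for y
    by (rule nash_equilibrium_iff_vi_solution[OF
          convex_prod_actions_factor[OF X_convex Xs_nonempty] ui_diff gamma_pos diss less_imp_le[OF k]])
  show ?thesis
  proof (intro exI[of _ xs] conjI allI impI)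
    show "nash_equilibrium Xs ui xs" using xs nash_iff by simp
    show "y = xs" if "nash_equilibrium Xs ui y" for y
      using vi_solution_unique[OF diss k] xs that nash_iff by blast
    fix x :: "real \<Rightarrow> real^'n"
    assume "\<forall>t\<ge>0. x t \<in> ?X"
      and "\<forall>t\<ge>0. (x has_vector_derivative (\<chi> i. \<gamma> i * (Du i (x t) $ i))) (at t within {0..})"
    then have "norm (x t - xs) \<le> norm (x 0 - xs) * exp (- ?k * t)" if "t \<ge> 0" for t
      using vi_solution_exponentially_attracting[OF diss xs] that by (simp add: pseudo_gradient_def)
    then have "(\<lambda>t. norm (x t - xs)) \<in> O[at_top](\<lambda>t. exp (- ?k * t))"
      by (intro bigoI[where c = "norm (x 0 - xs)"] eventually_mono[OF eventually_ge_at_top[of 0]]) simp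
    then show "\<exists>c0>0. (\<lambda>t. norm (x t - xs)) \<in> O[at_top](\<lambda>t. exp (- c0 * t))"
      using k by blast
  qed
qed

end
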